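(* Let $\varepsilon>0$ be small, $x$ large, $0\le\theta\le\frac1{30}$, $\rho=\frac12(1-4\theta)-\varepsilon$, and $z_1\le x^{1/2}$. Let $$\mathcal{D}^{+,\mathrm{LIN}}=\{p_1\cdots p_r\le x^{\rho}:\ z_1\ge p_1>\dots>p_r,\ p_1\cdots p_{2k-2}p_{2k-1}^3\le x^{\rho}\text{ for all }k\ge1\}$$ ($p_i$ primes). Then for any $D\in[x^{1/5},x^{\rho}]$, every $d\in\mathcal{D}^{+,\mathrm{LIN}}$ can be written as $d=d_1d_2$ with positive integers $d_1,d_2$ satisfying $d_1\le D$ and $d_1d_2^2\le x^{1-4\theta-2\varepsilon^2}/D$; moreover one can take either $d_1\ge x^{0.1}$ or $d_2=1$.
   Context: Conditions in the definition of $\mathcal{D}^{+,\mathrm{LIN}}$ involving indices larger than $r$ are vacuous. *)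

theory Defs
  imports Complex_Main "HOL-Computational_Algebra.Primes"
begin

text \<open>The prime list ps is 0-indexed, so p_{2k-1} = ps ! (2k-2).\<close>
definition DLIN :: "real \<Rightarrow> real \<Rightarrow> real \<Rightarrow> nat set" where
  "DLIN x \<rho> z1 = {prod_list ps | ps.
      (\<forall>p\<in>set ps. prime p) \<and>
      sorted_wrt (>) ps \<and>
      (ps \<noteq> [] \<longrightarrow> real (hd ps) \<le> z1) \<and>
      real (prod_list ps) \<le> x powr \<rho> \<and>
      (\<forall>k::nat. 1 \<le> k \<and> 2*k - 1 \<le> length ps \<longrightarrow>
          real (prod_list (take (2*k - 2) ps) * (ps ! (2*k - 2))^3) \<le> x powr \<rho>)}"

end

theory Submission
  imports Defs
begin

text \<open>Distribute the primes of d, largest first, greedily: a prime goes into d1 if d1 stays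
  at most D, otherwise into d2 if d2 stays at most x^\<rho>/D. The cube conditions together with the
  decreasing order give p_1 ... p_(j-1) p_j^2 \<le> x^\<rho> for every j, so no prime overflows both
  factors at once. If d2 \<noteq> 1, some prime p overflowed d1 when d1 was already at least p_1 > p,
  whence d1^2 > D \<ge> x^(1/5). The first prime fits into d1 because p_1^3 \<le> x^\<rho> \<le> x^(3/5) \<le> D^3,
  and d1 d2^2 = d d2 \<le> x^\<rho> x^\<rho>/D.\<close>

text \<open>With 0-based indexing, index j = 2k - 2 holds the paper's prime p_(2k-1).\<close>
definition cube_bounded :: "real \<Rightarrow> nat list \<Rightarrow> bool" where
  "cube_bounded y ps \<longleftrightarrow>
     (\<forall>j<length ps. even j \<longrightarrow> real (prod_list (take j ps) * (ps ! j)^3) \<le> y)"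

definition square_bounded :: "real \<Rightarrow> nat list \<Rightarrow> bool" where
  "square_bounded y ps \<longleftrightarrow>
     (\<forall>j<length ps. real (prod_list (take j ps) * (ps ! j)^2) \<le> y)"

lemma square_bounded_snoc:
  "square_bounded y (xs @ [p]) \<longleftrightarrow> square_bounded y xs \<and> real (prod_list xs * p^2) \<le> y"
  unfolding square_bounded_def by (auto simp: nth_append less_Suc_eq)

lemma square_bounded_if_cube_bounded:
  assumes sorted: "sorted_wrt (>) ps" and cube: "cube_bounded y ps"
  shows "square_bounded y ps"
  unfolding square_bounded_def
proof (intro allI impI)
  fix j assume j: "j < length ps"
  show "real (prod_list (take j ps) * (ps ! j)^2) \<le> y"
  proof (cases "even j")
    case True
    have "(ps ! j)^2 \<le> (ps ! j)^3"
      by (cases "ps ! j") (simp_all add: power_increasing)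
    then have "prod_list (take j ps) * (ps ! j)^2 \<le> prod_list (take j ps) * (ps ! j)^3"
      by simp
    then show ?thesis
      using cube j True unfolding cube_bounded_def by (meson of_nat_mono order_trans)
  next
    case False
    then obtain i where i: "j = Suc i" "even i" by (metis oddE even_Suc add.commute plus_1_eq_Suc)
    define q where "q = ps ! i"
    have take_j: "take j ps = take i ps @ [q]"
      using i j by (simp add: q_def take_Suc_conv_app_nth)
    have "ps ! j < q" using sorted i j by (simp add: q_def sorted_wrt_iff_nth_less)
    then have "q * (ps ! j)^2 \<le> q^3"
      by (simp add: power2_eq_square power3_eq_cube mult_mono)
    then have "prod_list (take j ps) * (ps ! j)^2 \<le> prod_list (take i ps) * q^3"
      by (simp add: take_j mult.assoc)
    then show ?thesis
      using cube i j unfolding cube_bounded_def q_def by (meson Suc_lessD of_nat_mono order_trans)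
  qed
qed

lemma greedy_split:
  fixes ps :: "nat list" and M N L :: real
  assumes "sorted_wrt (>) ps" "\<forall>p\<in>set ps. 0 < p" "square_bounded (M * N) ps"
    and "ps \<noteq> [] \<Longrightarrow> real (hd ps) \<le> M"
    and M: "1 \<le> M" and N: "1 \<le> N" and L: "0 \<le> L" "L * L \<le> M"
  shows "\<exists>m n. m * n = prod_list ps \<and> real m \<le> M \<and> real n \<le> N \<and> (n = 1 \<or> L \<le> real m)"
  using assms(1-4)
proof (induction ps rule: rev_induct)
  case Nil
  then show ?case using M N by (intro exI[of _ 1]) auto
next
  case (snoc p xs)
  have sorted: "sorted_wrt (>) xs" and above_p: "\<forall>q\<in>set xs. p < q"
    using snoc.prems(1) by (auto simp: sorted_wrt_append)
  have p: "0 < p" "\<forall>q\<in>set xs. 0 < q" using snoc.prems(2) by auto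
  have bounded: "square_bounded (M * N) xs" and new: "real (prod_list xs * p^2) \<le> M * N"
    using snoc.prems(3) by (auto simp: square_bounded_snoc)
  have hd_xs: "xs \<noteq> [] \<Longrightarrow> real (hd xs) \<le> M" using snoc.prems(4) by auto
  obtain m n where mn: "m * n = prod_list xs" "real m \<le> M" "real n \<le> N" "n = 1 \<or> L \<le> real m"
    using snoc.IH[OF sorted p(2) bounded hd_xs] by blast
  consider "real (m * p) \<le> M" | "real (m * p) > M" "real (n * p) \<le> N"
    | "real (m * p) > M" "real (n * p) > N" by linarith
  then show ?case
  proof cases
    case 1
    have "m \<le> m * p" using p by simp
    then have "n = 1 \<or> L \<le> real (m * p)" using mn(4) by (meson of_nat_mono order_trans)
    then show ?thesis using 1 mn by (intro exI[of _ "m * p"] exI[of _ n]) auto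
  next
    case 2
    have "L \<le> real m"
    proof (cases "n = 1")
      case True
      then have m: "m = prod_list xs" using mn(1) by simp
      have "xs \<noteq> []" using 2 m snoc.prems(4) by auto
      moreover have "prod_list xs \<noteq> 0" using p(2) by (auto simp: prod_list_zero_iff)
      ultimately have "p < hd xs" "hd xs \<le> m"
        using above_p by (auto simp: m intro!: dvd_imp_le prod_list_dvd)
      then have "real (m * p) \<le> real (m * m)" by (intro of_nat_mono mult_left_mono) auto
      then have "L * L < real m * real m" using 2 L by simp
      then show ?thesis using L by (metis mult_mono not_le of_nat_0_le_iff less_le_not_le)
    qed (use mn(4) in auto)
    then show ?thesis using 2 mn by (intro exI[of _ m] exI[of _ "n * p"]) auto
  next
    case 3
    have "M * N < real (m * p) * real (n * p)"
      using 3 M N by (intro mult_strict_mono) auto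
    also have "\<dots> = real (prod_list xs * p^2)" by (simp add: mn(1)[symmetric] power2_eq_square)
    finally show ?thesis using new by linarith
  qed
qed

lemma DLIN_split:
  fixes x \<rho> z1 D :: real and d :: nat
  assumes x: "1 \<le> x" and \<rho>: "\<rho> \<le> 1/2"
    and D: "x powr (1/5) \<le> D" "D \<le> x powr \<rho>" and d: "d \<in> DLIN x \<rho> z1"
  shows "\<exists>d1 d2. d = d1 * d2 \<and> 0 < d1 \<and> 0 < d2 \<and> real d1 \<le> D \<and>
           real (d1 * d2^2) \<le> x powr (2 * \<rho>) / D \<and> (x powr (1/10) \<le> real d1 \<or> d2 = 1)"
proof -
  define X where "X = x powr \<rho>"
  obtain ps where ps: "d = prod_list ps" "\<forall>p\<in>set ps. prime p" "sorted_wrt (>) ps"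
      "real (prod_list ps) \<le> X"
      and cube: "\<forall>k::nat. 1 \<le> k \<and> 2*k - 1 \<le> length ps \<longrightarrow>
          real (prod_list (take (2*k - 2) ps) * (ps ! (2*k - 2))^3) \<le> X"
    using d unfolding DLIN_def X_def by blast
  have pos: "\<forall>p\<in>set ps. 0 < p" using ps(2) prime_gt_0_nat by blast
  have "cube_bounded X ps"
    unfolding cube_bounded_def
  proof (intro allI impI)
    fix j assume "j < length ps" "even j"
    then show "real (prod_list (take j ps) * (ps ! j)^3) \<le> X"
      using cube[rule_format, of "j div 2 + 1"] by auto
  qed
  have D1: "1 \<le> D" using ge_one_powr_ge_zero[OF x, of "1/5"] D(1) by linarith
  have "square_bounded (D * (X / D)) ps"
    using square_bounded_if_cube_bounded[OF ps(3) \<open>cube_bounded X ps\<close>] D1 by simp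
  have hd_le: "real (hd ps) \<le> D" if "ps \<noteq> []"
  proof -
    have "real (hd ps) ^ 3 \<le> X"
      using \<open>cube_bounded X ps\<close> that by (auto simp: cube_bounded_def hd_conv_nth)
    also have "X \<le> x powr (3/5)" unfolding X_def using \<rho> x by (intro powr_mono) auto
    also have "x powr (3/5) = (x powr (1/5)) ^ 3" using x by (simp add: powr_realpow[symmetric] powr_powr)
    also have "\<dots> \<le> D ^ 3" using D by (intro power_mono) auto
    finally show ?thesis using D1 by (simp add: power_mono_iff)
  qed
  have X_ge_D: "1 \<le> X / D" using D(2) D1 by (simp add: X_def)
  have "x powr (1/10) * x powr (1/10) \<le> D" using D(1) by (simp add: powr_add[symmetric])
  then obtain d1 d2 where split: "d1 * d2 = d" "real d1 \<le> D" "real d2 \<le> X / D"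
      "d2 = 1 \<or> x powr (1/10) \<le> real d1"
    using greedy_split[OF ps(3) pos \<open>square_bounded (D * (X / D)) ps\<close> hd_le D1 X_ge_D] ps(1)
    by (metis powr_ge_zero)
  have "d \<noteq> 0" using pos by (auto simp: ps(1) prod_list_zero_iff)
  then have "0 < d1" "0 < d2" using split(1) by auto
  have "real (d1 * d2^2) = real d * real d2" by (simp add: split(1)[symmetric] power2_eq_square)
  also have "\<dots> \<le> X * (X / D)" using ps(1,4) split(3) by (intro mult_mono) auto
  also have "\<dots> = x powr (2 * \<rho>) / D" by (simp add: X_def powr_add[symmetric])
  finally show ?thesis using split \<open>0 < d1\<close> \<open>0 < d2\<close> by auto
qed

theorem lemma9:
  "\<exists>\<epsilon>0>0. \<forall>\<epsilon>::real. 0 < \<epsilon> \<and> \<epsilon> < \<epsilon>0 \<longrightarrow>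
     (\<exists>x0. \<forall>x::real. x \<ge> x0 \<longrightarrow>
       (\<forall>\<theta>::real. \<forall>z1::real. \<forall>D::real. \<forall>d::nat.
          0 \<le> \<theta> \<and> \<theta> \<le> 1/30 \<and> z1 \<le> x powr (1/2) \<and>
          x powr (1/5) \<le> D \<and> D \<le> x powr ((1 - 4*\<theta>)/2 - \<epsilon>) \<and>
          d \<in> DLIN x ((1 - 4*\<theta>)/2 - \<epsilon>) z1 \<longrightarrow>
          (\<exists>d1 d2::nat. d = d1 * d2 \<and> 0 < d1 \<and> 0 < d2 \<and>
             real d1 \<le> D \<and>
             real (d1 * d2^2) \<le> x powr (1 - 4*\<theta> - 2*\<epsilon>^2) / D \<and>
             (real d1 \<ge> x powr (1/10) \<or> d2 = 1))))"
proof (intro exI[of _ "1::real"] conjI zero_less_one allI impI)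
  fix \<epsilon> x \<theta> z1 D :: real and d :: nat
  assume \<epsilon>: "0 < \<epsilon> \<and> \<epsilon> < 1" and x: "1 \<le> x"
    and H: "0 \<le> \<theta> \<and> \<theta> \<le> 1/30 \<and> z1 \<le> x powr (1/2) \<and>
      x powr (1/5) \<le> D \<and> D \<le> x powr ((1 - 4*\<theta>)/2 - \<epsilon>) \<and>
      d \<in> DLIN x ((1 - 4*\<theta>)/2 - \<epsilon>) z1"
  define \<rho> where "\<rho> = (1 - 4*\<theta>)/2 - \<epsilon>"
  have \<rho>: "\<rho> \<le> 1/2" using H \<epsilon> by (simp add: \<rho>_def field_simps)
  have D: "x powr (1/5) \<le> D" "D \<le> x powr \<rho>" and d: "d \<in> DLIN x \<rho> z1"
    using H by (simp_all add: \<rho>_def)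
  obtain d1 d2 where split: "d = d1 * d2" "0 < d1" "0 < d2" "real d1 \<le> D"
      "real (d1 * d2^2) \<le> x powr (2 * \<rho>) / D" "x powr (1/10) \<le> real d1 \<or> d2 = 1"
    using DLIN_split[OF x \<rho> D d] by auto
  have "\<epsilon>^2 \<le> \<epsilon>" using \<epsilon> by (simp add: power2_eq_square mult_le_cancel_right1)
  then have "x powr (2 * \<rho>) \<le> x powr (1 - 4*\<theta> - 2*\<epsilon>^2)"
    using x by (intro powr_mono) (auto simp: \<rho>_def field_simps)
  moreover have "1 \<le> D" using ge_one_powr_ge_zero[OF x, of "1/5"] D(1) by linarith
  ultimately have "real (d1 * d2^2) \<le> x powr (1 - 4*\<theta> - 2*\<epsilon>^2) / D"
    using split(5) by (meson divide_right_mono order_trans zero_le_one)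
  then show "\<exists>d1 d2::nat. d = d1 * d2 \<and> 0 < d1 \<and> 0 < d2 \<and> real d1 \<le> D \<and>
      real (d1 * d2^2) \<le> x powr (1 - 4*\<theta> - 2*\<epsilon>^2) / D \<and>
      (real d1 \<ge> x powr (1/10) \<or> d2 = 1)"
    using split by blast
qed

end
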